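(* Let $G=(V,E)$ be a connected graph, $s\in V$, and $\mathcal{T}$ the layering tree of $G$ with respect to $s$. Let $i\ge \ell(\mathcal{T})+2$ and $k\le i-\ell(\mathcal{T})-2$. Then $\mathcal{T}_k$ is determined by $G_i$ together with the layers $L_0,\dots,L_{i-1}$: for every $j\le k-1$, two vertices $u,v\in L_j$ lie in the same part of $\mathcal{T}$ if and only if they are connected in $G_i[L_{\ge j}]=G[L_j\cup\dots\cup L_{i-1}]$, and two parts at layers $\le k-1$ are adjacent in $\mathcal{T}$ iff some edge of $G_i$ joins them. In particular $\mathcal{T}_k$ can be computed from $G_i$ without any distance queries.
   Context: For a connected graph $G$ and root $s\in V(G)$, the BFS layers are $L_i=\{v: d_G(s,v)=i\}$ for $i\ge 0$, with $L_{\le k}=L_0\cup\dots\cup L_k$, $L_{\ge k}=\bigcup_{j\ge k}L_j$, $L_{-1}=\emptyset$. For each $i\ge 0$, let $S_i^1,\dots,S_i^{s_i}$ be the connected components of $G\setminus L_{\le i-1}$ (i.e. of $G[L_{\ge i}]$), and let $P_i^j=S_i^j\cap L_i$; the nonempty sets $P_i^j$ are the parts at layer (depth) $i$, and the set $\mathcal{P}$ of all parts over all layers partitions $V(G)$. The layering tree $\mathcal{T}=(\mathcal{P},\mathcal{E})$ has the parts as vertices, with $(P,P')\in\mathcal{E}$ iff some $u\in P$, $u'\in P'$ are adjacent in $G$. Its length is $\ell(\mathcal{T})=\max_{P\in\mathcal{P}}\max_{u,v\in P} d_G(u,v)$ (distances measured in $G$). $G_i=G[L_{\le i-1}]$ is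 the subgraph induced by the first $i$ layers, and $\mathcal{T}_k$ is the subtree of $\mathcal{T}$ induced by the parts at layers $0,1,\dots,k-1$. *)

theory Defs
  imports Main
begin

text \<open>A simple graph is given by a vertex set V and a symmetric irreflexive
  adjacency predicate E (only edges between vertices of V are relevant).\<close>

definition simple_graph :: "'a set \<Rightarrow> ('a \<Rightarrow> 'a \<Rightarrow> bool) \<Rightarrow> bool" where
  "simple_graph V E \<longleftrightarrow> finite V \<and> (\<forall>x y. E x y \<longrightarrow> E y x) \<and> (\<forall>x. \<not> E x x)"

definition edge_rel :: "'a set \<Rightarrow> ('a \<Rightarrow> 'a \<Rightarrow> bool) \<Rightarrow> ('a \<times> 'a) set" where
  "edge_rel V E = {(x, y). x \<in> V \<and> y \<in> V \<and> E x y}"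

definition connected_graph :: "'a set \<Rightarrow> ('a \<Rightarrow> 'a \<Rightarrow> bool) \<Rightarrow> bool" where
  "connected_graph V E \<longleftrightarrow> V \<noteq> {} \<and> (\<forall>u\<in>V. \<forall>v\<in>V. (u, v) \<in> (edge_rel V E)\<^sup>*)"

definition gdist :: "'a set \<Rightarrow> ('a \<Rightarrow> 'a \<Rightarrow> bool) \<Rightarrow> 'a \<Rightarrow> 'a \<Rightarrow> nat" where
  "gdist V E u v = (LEAST n. (u, v) \<in> (edge_rel V E) ^^ n)"

definition conn_in :: "'a set \<Rightarrow> ('a \<Rightarrow> 'a \<Rightarrow> bool) \<Rightarrow> 'a set \<Rightarrow> 'a \<Rightarrow> 'a \<Rightarrow> bool" where
  "conn_in V E W u v \<longleftrightarrow> u \<in> W \<and> v \<in> W \<and> (u, v) \<in> (Restr (edge_rel V E) W)\<^sup>*"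

definition layer :: "'a set \<Rightarrow> ('a \<Rightarrow> 'a \<Rightarrow> bool) \<Rightarrow> 'a \<Rightarrow> nat \<Rightarrow> 'a set" where
  "layer V E s i = {v \<in> V. gdist V E s v = i}"

definition layers_ge :: "'a set \<Rightarrow> ('a \<Rightarrow> 'a \<Rightarrow> bool) \<Rightarrow> 'a \<Rightarrow> nat \<Rightarrow> 'a set" where
  "layers_ge V E s i = {v \<in> V. gdist V E s v \<ge> i}"

text \<open>L_0 \<union> ... \<union> L_{i-1}, the vertex set of G_i (empty for i = 0).\<close>
definition layers_below :: "'a set \<Rightarrow> ('a \<Rightarrow> 'a \<Rightarrow> bool) \<Rightarrow> 'a \<Rightarrow> nat \<Rightarrow> 'a set" where
  "layers_below V E s i = {v \<in> V. gdist V E s v < i}"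

definition part_at :: "'a set \<Rightarrow> ('a \<Rightarrow> 'a \<Rightarrow> bool) \<Rightarrow> 'a \<Rightarrow> nat \<Rightarrow> 'a set \<Rightarrow> bool" where
  "part_at V E s i P \<longleftrightarrow>
     (\<exists>S. S \<noteq> {} \<and> S \<subseteq> layers_ge V E s i
          \<and> (\<forall>u\<in>S. \<forall>v\<in>S. conn_in V E (layers_ge V E s i) u v)
          \<and> (\<forall>u\<in>S. \<forall>v. conn_in V E (layers_ge V E s i) u v \<longrightarrow> v \<in> S)
          \<and> P = S \<inter> layer V E s i \<and> P \<noteq> {})"

definition parts :: "'a set \<Rightarrow> ('a \<Rightarrow> 'a \<Rightarrow> bool) \<Rightarrow> 'a \<Rightarrow> 'a set set" where
  "parts V E s = {P. \<exists>i. part_at V E s i P}"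

definition tree_adj :: "'a set \<Rightarrow> ('a \<Rightarrow> 'a \<Rightarrow> bool) \<Rightarrow> 'a set \<Rightarrow> 'a set \<Rightarrow> bool" where
  "tree_adj V E P P' \<longleftrightarrow> (\<exists>u\<in>P. \<exists>u'\<in>P'. (u, u') \<in> edge_rel V E)"

definition tree_length :: "'a set \<Rightarrow> ('a \<Rightarrow> 'a \<Rightarrow> bool) \<Rightarrow> 'a \<Rightarrow> nat" where
  "tree_length V E s = Max {gdist V E u v | P u v. P \<in> parts V E s \<and> u \<in> P \<and> v \<in> P}"

end

theory Submission
  imports Defs
begin

text \<open>Two vertices of one part at layer \<open>D\<close> are at distance at most \<open>\<ell>(\<T>)\<close>, so
  every vertex on a shortest path between them has depth within \<open>\<ell>(\<T>)/2\<close> of \<open>D\<close>.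
  Put \<open>D = j + \<lceil>\<ell>(\<T>)/2\<rceil>\<close>. A path of \<open>G[L\<^sub>\<ge>\<^sub>j]\<close> between two vertices of \<open>L\<^sub>j\<close>
  is rerouted into \<open>L\<^sub>j \<union> \<dots> \<union> L\<^sub>i\<^sub>-\<^sub>1\<close>: every excursion above layer \<open>D\<close> leaves and
  re-enters \<open>L\<^sub>D\<close> inside one component of \<open>G[L\<^sub>\<ge>\<^sub>D]\<close>, i.e. inside one part, and is
  replaced by a shortest path. Adjacency of parts below layer \<open>k\<close> is unaffected, since
  these parts lie in \<open>G\<^sub>i\<close>.\<close>

lemma sym_relpow:
  assumes "sym R"
  shows "sym (R ^^ n)"
proof (induction n)
  case 0
  then show ?case by (simp add: sym_Id)
next
  case (Suc n)
  show ?case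
  proof (rule symI)
    fix a b assume "(a, b) \<in> R ^^ Suc n"
    then obtain c where "(a, c) \<in> R ^^ n" "(c, b) \<in> R" by auto
    then have "(b, c) \<in> R" "(c, a) \<in> R ^^ n" using assms Suc.IH by (auto dest: symD)
    then show "(b, a) \<in> R ^^ Suc n" by (rule relpow_Suc_I2)
  qed
qed

lemma relpow_imp_rtrancl_Restr_intermediate:
  "(a, b) \<in> R ^^ n \<Longrightarrow>
   (a, b) \<in> (Restr R {w. \<exists>p q. p + q = n \<and> (a, w) \<in> R ^^ p \<and> (w, b) \<in> R ^^ q})\<^sup>*"
proof (induction n arbitrary: a)
  case 0
  then show ?case by simp
next
  case (Suc n)
  from Suc.prems obtain c where c: "(a, c) \<in> R" "(c, b) \<in> R ^^ n" by (blast dest: relpow_Suc_D2)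
  let ?M = "{w. \<exists>p q. p + q = Suc n \<and> (a, w) \<in> R ^^ p \<and> (w, b) \<in> R ^^ q}"
  let ?Mc = "{w. \<exists>p q. p + q = n \<and> (c, w) \<in> R ^^ p \<and> (w, b) \<in> R ^^ q}"
  have "?Mc \<subseteq> ?M"
  proof
    fix w assume "w \<in> ?Mc"
    then obtain p q where pq: "p + q = n" "(c, w) \<in> R ^^ p" "(w, b) \<in> R ^^ q" by blast
    have "(a, w) \<in> R ^^ Suc p" using c(1) pq(2) by (rule relpow_Suc_I2)
    then show "w \<in> ?M" using pq by (intro CollectI exI[of _ "Suc p"] exI[of _ q]) auto
  qed
  then have "(c, b) \<in> (Restr R ?M)\<^sup>*"
    using Suc.IH[OF c(2)] rtrancl_mono[of "Restr R ?Mc" "Restr R ?M"] by blast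
  moreover have "a \<in> ?M" using Suc.prems by (intro CollectI exI[of _ 0] exI[of _ "Suc n"]) auto
  moreover have "c \<in> ?M" using c by (intro CollectI exI[of _ 1] exI[of _ n]) auto
  ultimately show ?case using c(1) by (meson IntI SigmaI converse_rtrancl_into_rtrancl)
qed

lemma sym_edge_rel: "simple_graph V E \<Longrightarrow> sym (edge_rel V E)"
  unfolding simple_graph_def edge_rel_def sym_def by auto

lemma edge_relD: "(a, b) \<in> edge_rel V E \<Longrightarrow> a \<in> V \<and> b \<in> V"
  unfolding edge_rel_def by auto

lemma rtrancl_edge_rel_closed: "(a, b) \<in> (edge_rel V E)\<^sup>* \<Longrightarrow> a \<in> V \<Longrightarrow> b \<in> V"
  by (induction rule: rtrancl_induct) (auto dest: edge_relD)

lemma relpow_gdist: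
  assumes "connected_graph V E" "u \<in> V" "v \<in> V"
  shows "(u, v) \<in> edge_rel V E ^^ gdist V E u v"
proof -
  have "\<exists>n. (u, v) \<in> edge_rel V E ^^ n"
    using assms unfolding connected_graph_def by (simp add: rtrancl_power)
  then show ?thesis unfolding gdist_def by (rule LeastI_ex)
qed

lemma gdist_le_relpow: "(u, v) \<in> edge_rel V E ^^ n \<Longrightarrow> gdist V E u v \<le> n"
  unfolding gdist_def by (rule Least_le)

lemma gdist_relpow_le:
  assumes "connected_graph V E" "s \<in> V" "x \<in> V" "(x, y) \<in> edge_rel V E ^^ p"
  shows "gdist V E s y \<le> gdist V E s x + p"
  using relpow_trans[OF relpow_gdist[OF assms(1-3)] assms(4)] by (rule gdist_le_relpow)

lemma conn_in_sym: "simple_graph V E \<Longrightarrow> conn_in V E W a b \<Longrightarrow> conn_in V E W b a"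
proof -
  assume sg: "simple_graph V E" and ab: "conn_in V E W a b"
  have "sym (Restr (edge_rel V E) W)"
    using sym_edge_rel[OF sg] unfolding sym_def by blast
  then have "sym ((Restr (edge_rel V E) W)\<^sup>*)" by (rule sym_rtrancl)
  then show ?thesis using ab unfolding conn_in_def by (meson symD)
qed

lemma conn_in_trans: "conn_in V E W a b \<Longrightarrow> conn_in V E W b c \<Longrightarrow> conn_in V E W a c"
  unfolding conn_in_def by auto

lemma conn_in_refl: "a \<in> W \<Longrightarrow> conn_in V E W a a"
  unfolding conn_in_def by simp

lemma conn_in_mono: "W \<subseteq> W' \<Longrightarrow> conn_in V E W a b \<Longrightarrow> conn_in V E W' a b"
  unfolding conn_in_def using rtrancl_mono[of "Restr (edge_rel V E) W" "Restr (edge_rel V E) W'"]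
  by blast

lemma conn_in_edge:
  "conn_in V E W a b \<Longrightarrow> (b, c) \<in> edge_rel V E \<Longrightarrow> c \<in> W \<Longrightarrow> conn_in V E W a c"
  unfolding conn_in_def by (meson IntI SigmaI rtrancl.rtrancl_into_rtrancl)

lemma part_at_subset_layer: "part_at V E s j P \<Longrightarrow> P \<subseteq> layer V E s j"
  unfolding part_at_def by auto

lemma part_at_containing:
  assumes sg: "simple_graph V E" and u: "u \<in> layer V E s j" and v: "v \<in> layer V E s j"
    and uv: "conn_in V E (layers_ge V E s j) u v"
  shows "\<exists>P. part_at V E s j P \<and> u \<in> P \<and> v \<in> P"
proof -
  let ?W = "layers_ge V E s j"
  define S where "S = {w. conn_in V E ?W u w}"
  have uS: "u \<in> S" using u unfolding S_def conn_in_def layer_def layers_ge_def by auto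
  have "part_at V E s j (S \<inter> layer V E s j)"
    unfolding part_at_def
  proof (intro exI[of _ S] conjI)
    show "S \<subseteq> ?W" unfolding S_def conn_in_def by blast
    show "\<forall>a\<in>S. \<forall>b\<in>S. conn_in V E ?W a b"
      unfolding S_def by (metis conn_in_sym[OF sg] conn_in_trans mem_Collect_eq)
    show "\<forall>a\<in>S. \<forall>b. conn_in V E ?W a b \<longrightarrow> b \<in> S"
      unfolding S_def by (metis conn_in_trans mem_Collect_eq)
    show "S \<inter> layer V E s j \<noteq> {}" using uS u by blast
  qed (use uS in auto)
  moreover have "v \<in> S" unfolding S_def using uv by simp
  ultimately show ?thesis using uS u v by blast
qed

lemma same_part_iff_conn_in:
  assumes sg: "simple_graph V E" and u: "u \<in> layer V E s j" and v: "v \<in> layer V E s j"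
  shows "(\<exists>P\<in>parts V E s. u \<in> P \<and> v \<in> P) \<longleftrightarrow> conn_in V E (layers_ge V E s j) u v"
proof
  assume "\<exists>P\<in>parts V E s. u \<in> P \<and> v \<in> P"
  then obtain P j' where P: "part_at V E s j' P" "u \<in> P" "v \<in> P" unfolding parts_def by blast
  have "j' = j" using part_at_subset_layer[OF P(1)] P(2) u unfolding layer_def by auto
  with P show "conn_in V E (layers_ge V E s j) u v" unfolding part_at_def by blast
next
  assume "conn_in V E (layers_ge V E s j) u v"
  then show "\<exists>P\<in>parts V E s. u \<in> P \<and> v \<in> P"
    using part_at_containing[OF sg u v] unfolding parts_def by blast
qed

lemma gdist_le_tree_length:
  assumes sg: "simple_graph V E" and P: "P \<in> parts V E s" and "u \<in> P" "v \<in> P"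
  shows "gdist V E u v \<le> tree_length V E s"
proof -
  let ?X = "{gdist V E u v | P u v. P \<in> parts V E s \<and> u \<in> P \<and> v \<in> P}"
  have "parts V E s \<subseteq> Pow V"
    unfolding parts_def using part_at_subset_layer unfolding layer_def by fastforce
  then have "?X \<subseteq> (\<lambda>(u, v). gdist V E u v) ` (V \<times> V)" by fast
  moreover have "finite V" using sg unfolding simple_graph_def by simp
  ultimately have "finite ?X" by (meson finite_SigmaI finite_imageI finite_subset)
  then show ?thesis unfolding tree_length_def using assms by (intro Max_ge) blast+
qed

locale rooted_graph =
  fixes V :: "'a set" and E :: "'a \<Rightarrow> 'a \<Rightarrow> bool" and s :: 'a
  assumes simple: "simple_graph V E" and connected: "connected_graph V E" and root: "s \<in> V"
begin

abbreviation depth :: "'a \<Rightarrow> nat" where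
  "depth x \<equiv> gdist V E s x"

abbreviation window :: "nat \<Rightarrow> nat \<Rightarrow> 'a set" where
  "window j i \<equiv> layers_ge V E s j \<inter> layers_below V E s i"

lemma mem_window: "x \<in> window j i \<longleftrightarrow> x \<in> V \<and> j \<le> depth x \<and> depth x < i"
  unfolding layers_ge_def layers_below_def by auto

lemma depth_edge_le:
  assumes "(x, y) \<in> edge_rel V E"
  shows "depth y \<le> depth x + 1"
  using gdist_relpow_le[OF connected root _, of x y 1] edge_relD[OF assms] assms by simp

lemma conn_in_window_if_close:
  assumes y: "y \<in> layer V E s D" and y': "y' \<in> layer V E s D"
    and lower: "2 * j + gdist V E y y' \<le> 2 * D" and upper: "2 * D + gdist V E y y' < 2 * i"
  shows "conn_in V E (window j i) y y'"
proof -
  let ?R = "edge_rel V E"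
  define n where "n = gdist V E y y'"
  have yV: "y \<in> V" and y'V: "y' \<in> V" and dy: "depth y = D" and dy': "depth y' = D"
    using y y' unfolding layer_def by auto
  let ?M = "{w. \<exists>p q. p + q = n \<and> (y, w) \<in> ?R ^^ p \<and> (w, y') \<in> ?R ^^ q}"
  have "?M \<subseteq> window j i"
  proof
    fix w assume "w \<in> ?M"
    then obtain p q where pq: "p + q = n" "(y, w) \<in> ?R ^^ p" "(w, y') \<in> ?R ^^ q" by blast
    have wV: "w \<in> V" using rtrancl_edge_rel_closed[OF relpow_imp_rtrancl[OF pq(2)] yV] .
    have "(y', w) \<in> ?R ^^ q" "(w, y) \<in> ?R ^^ p"
      using pq sym_relpow[OF sym_edge_rel[OF simple]] by (auto dest: symD)
    \<comment> \<open>hence \<open>|depth w - D| \<le> min p q \<le> n / 2\<close>\<close>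
    then have "depth w \<le> D + p" "depth w \<le> D + q" "D \<le> depth w + p" "D \<le> depth w + q"
      using gdist_relpow_le[OF connected root] pq yV y'V wV dy dy' by fastforce+
    then show "w \<in> window j i" using wV pq(1) lower upper unfolding n_def mem_window by linarith
  qed
  then have "(y, y') \<in> (Restr ?R (window j i))\<^sup>*"
    using relpow_imp_rtrancl_Restr_intermediate[OF relpow_gdist[OF connected yV y'V]]
      rtrancl_mono[of "Restr ?R ?M" "Restr ?R (window j i)"] unfolding n_def by blast
  moreover have "y \<in> window j i" "y' \<in> window j i"
    using yV y'V dy dy' lower upper unfolding mem_window by auto
  ultimately show ?thesis unfolding conn_in_def by blast
qed

lemma conn_in_window_if_same_part:
  assumes y: "y \<in> layer V E s D" and y': "y' \<in> layer V E s D"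
    and yy': "conn_in V E (layers_ge V E s D) y y'"
    and lower: "2 * j + tree_length V E s \<le> 2 * D" and upper: "2 * D + tree_length V E s < 2 * i"
  shows "conn_in V E (window j i) y y'"
proof -
  obtain P where "part_at V E s D P" "y \<in> P" "y' \<in> P"
    using part_at_containing[OF simple y y' yy'] by blast
  then have "gdist V E y y' \<le> tree_length V E s"
    using gdist_le_tree_length[OF simple] unfolding parts_def by blast
  then show ?thesis using conn_in_window_if_close[OF y y'] lower upper by simp
qed

text \<open>The invariant carried along a path of \<open>G[L\<^sub>\<ge>\<^sub>j]\<close> from \<open>u\<close>: the witness \<open>y\<close> is the
  vertex of \<open>L\<^sub>D\<close> where the current excursion above layer \<open>D\<close> began.\<close>

definition reach_via_layer :: "'a set \<Rightarrow> nat \<Rightarrow> 'a \<Rightarrow> 'a \<Rightarrow> bool" where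
  "reach_via_layer W D u x \<longleftrightarrow>
     (depth x \<le> D \<and> conn_in V E W u x)
     \<or> (\<exists>y\<in>layer V E s D. conn_in V E W u y \<and> conn_in V E (layers_ge V E s D) y x)"

lemma conn_in_window_if_reach_via_layer:
  assumes "reach_via_layer (window j i) D u x" and "depth x \<le> D"
    and lower: "2 * j + tree_length V E s \<le> 2 * D" and upper: "2 * D + tree_length V E s < 2 * i"
  shows "conn_in V E (window j i) u x"
  using assms(1) unfolding reach_via_layer_def
proof (elim disjE conjE bexE)
  fix y assume y: "y \<in> layer V E s D" and uy: "conn_in V E (window j i) u y"
    and yx: "conn_in V E (layers_ge V E s D) y x"
  have "x \<in> layer V E s D"
    using yx assms(2) unfolding conn_in_def layers_ge_def layer_def by auto
  then have "conn_in V E (window j i) y x"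
    using conn_in_window_if_same_part[OF y _ yx lower upper] by blast
  then show ?thesis by (rule conn_in_trans[OF uy])
qed

lemma reach_via_layer_edge:
  assumes ux: "reach_via_layer (window j i) D u x" and xx': "(x, x') \<in> edge_rel V E"
    and x': "j \<le> depth x'"
    and lower: "2 * j + tree_length V E s \<le> 2 * D" and upper: "2 * D + tree_length V E s < 2 * i"
  shows "reach_via_layer (window j i) D u x'"
proof -
  have x'V: "x' \<in> V" using edge_relD[OF xx'] by simp
  have "depth x' \<le> depth x + 1" "depth x \<le> depth x' + 1"
    using depth_edge_le xx' sym_edge_rel[OF simple] by (auto dest: symD)
  show ?thesis
  proof (cases "depth x \<le> D \<and> depth x' \<le> D")
    case True
    then have "conn_in V E (window j i) u x"
      using conn_in_window_if_reach_via_layer[OF ux _ lower upper] by blast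
    moreover have "x' \<in> window j i" using True x' x'V upper unfolding mem_window by linarith
    ultimately have "conn_in V E (window j i) u x'" by (rule conn_in_edge[OF _ xx'])
    with True show ?thesis unfolding reach_via_layer_def by blast
  next
    case False
    then have above: "D \<le> depth x'" using \<open>depth x \<le> depth x' + 1\<close> by linarith
    obtain y where y: "y \<in> layer V E s D" "conn_in V E (window j i) u y"
      "conn_in V E (layers_ge V E s D) y x"
    proof (cases "depth x \<le> D")
      case True
      then have "depth x = D" using False \<open>depth x' \<le> depth x + 1\<close> by linarith
      then have "x \<in> layer V E s D" "conn_in V E (layers_ge V E s D) x x"
        using edge_relD[OF xx'] conn_in_refl[of x] unfolding layer_def layers_ge_def by auto
      moreover have "conn_in V E (window j i) u x"
        using conn_in_window_if_reach_via_layer[OF ux True lower upper] .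
      ultimately show ?thesis using that by blast
    next
      case False
      then show ?thesis using ux that unfolding reach_via_layer_def by auto
    qed
    moreover have "x' \<in> layers_ge V E s D" using above x'V unfolding layers_ge_def by simp
    ultimately have "conn_in V E (layers_ge V E s D) y x'" using xx' conn_in_edge by metis
    with y show ?thesis unfolding reach_via_layer_def by blast
  qed
qed

lemma conn_in_window:
  assumes u: "u \<in> layer V E s j" and v: "v \<in> layer V E s j"
    and uv: "conn_in V E (layers_ge V E s j) u v" and i: "j + tree_length V E s + 1 \<le> i"
  shows "conn_in V E (window j i) u v"
proof -
  define D where "D = j + (tree_length V E s + 1) div 2"
  have lower: "2 * j + tree_length V E s \<le> 2 * D" and upper: "2 * D + tree_length V E s < 2 * i"
    using i unfolding D_def by auto
  have "(u, v) \<in> (Restr (edge_rel V E) (layers_ge V E s j))\<^sup>*"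
    using uv unfolding conn_in_def by blast
  then have "reach_via_layer (window j i) D u v"
  proof (induction rule: rtrancl_induct)
    case base
    have "u \<in> window j i" using u upper unfolding layer_def mem_window D_def by auto
    then have "conn_in V E (window j i) u u" by (rule conn_in_refl)
    moreover have "depth u \<le> D" using u unfolding layer_def D_def by simp
    ultimately show ?case unfolding reach_via_layer_def by blast
  next
    case (step x x')
    then show ?case
      using reach_via_layer_edge[OF _ _ _ lower upper] unfolding layers_ge_def by blast
  qed
  moreover have "depth v \<le> D" using v unfolding layer_def D_def by simp
  ultimately show ?thesis by (rule conn_in_window_if_reach_via_layer[OF _ _ lower upper])
qed

end

theorem mainTheorem4:
  fixes V :: "'a set" and E :: "'a \<Rightarrow> 'a \<Rightarrow> bool" and s :: 'a and i k :: nat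
  assumes "simple_graph V E" and "connected_graph V E" and "s \<in> V"
    and "i \<ge> tree_length V E s + 2"
    and "k \<le> i - tree_length V E s - 2"
  shows "(\<forall>j<k. \<forall>u\<in>layer V E s j. \<forall>v\<in>layer V E s j.
            (\<exists>P\<in>parts V E s. u \<in> P \<and> v \<in> P)
              \<longleftrightarrow> conn_in V E (layers_ge V E s j \<inter> layers_below V E s i) u v)
       \<and> (\<forall>p<k. \<forall>q<k. \<forall>P P'. part_at V E s p P \<and> part_at V E s q P' \<longrightarrow>
            (tree_adj V E P P'
              \<longleftrightarrow> (\<exists>u\<in>P. \<exists>u'\<in>P'. (u, u') \<in> Restr (edge_rel V E) (layers_below V E s i))))"
proof (intro conjI allI impI ballI)
  interpret rooted_graph V E s using assms(1-3) by unfold_locales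
  fix j u v assume "j < k" and u: "u \<in> layer V E s j" and v: "v \<in> layer V E s j"
  then have bound: "j + tree_length V E s + 1 \<le> i" using assms(4,5) by linarith
  show "(\<exists>P\<in>parts V E s. u \<in> P \<and> v \<in> P) \<longleftrightarrow> conn_in V E (window j i) u v"
    unfolding same_part_iff_conn_in[OF simple u v]
  proof
    assume "conn_in V E (layers_ge V E s j) u v"
    then show "conn_in V E (window j i) u v" using bound by (rule conn_in_window[OF u v])
  next
    assume "conn_in V E (window j i) u v"
    then show "conn_in V E (layers_ge V E s j) u v" by (rule conn_in_mono[rotated]) blast
  qed
next
  fix p q P P' assume "p < k" "q < k" and parts: "part_at V E s p P \<and> part_at V E s q P'"
  then have "layer V E s p \<subseteq> layers_below V E s i" "layer V E s q \<subseteq> layers_below V E s i"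
    using assms(4,5) unfolding layer_def layers_below_def by auto
  then have "P \<subseteq> layers_below V E s i" "P' \<subseteq> layers_below V E s i"
    using parts part_at_subset_layer[of V E s p P] part_at_subset_layer[of V E s q P'] by auto
  then show "tree_adj V E P P'
      \<longleftrightarrow> (\<exists>u\<in>P. \<exists>u'\<in>P'. (u, u') \<in> Restr (edge_rel V E) (layers_below V E s i))"
    unfolding tree_adj_def by blast
qed

end
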